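(* There is an absolute constant $c > 0$ such that for every integer $n > 1$ there exist a set $P$ of $n$ points in the Euclidean plane $\mathbb{R}^2$ and a set $\mathcal{L}$ of $n$ lines in $\mathbb{R}^2$ such that the incidence graph $G = (P \cup \mathcal{L}, I(P,\mathcal{L}))$ contains no cycle of length $10$ (as a subgraph) and \[ |I(P,\mathcal{L})| \geq c\, n^{1+1/15}. \]
   Context: For a finite set $P$ of points and a finite set $\mathcal{L}$ of lines in the plane, $I(P,\mathcal{L}) = \{(p,\ell) \in P \times \mathcal{L} : p \in \ell\}$ is the set of incidences. The incidence graph of $(P,\mathcal{L})$ is the bipartite graph with vertex classes $P$ and $\mathcal{L}$ whose edge set is $I(P,\mathcal{L})$, i.e. $p \in P$ is adjacent to $\ell \in \mathcal{L}$ iff $p \in \ell$. A graph is $C_{10}$-free if it has no subgraph isomorphic to the cycle of length $10$. *)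

theory Defs
  imports Complex_Main
begin

type_synonym point = "real \<times> real"

definition is_line :: "point set \<Rightarrow> bool" where
  "is_line l \<longleftrightarrow> (\<exists>a b c. (a, b) \<noteq> (0, 0) \<and> l = {(x, y). a * x + b * y = c})"

definition incidences :: "point set \<Rightarrow> point set set \<Rightarrow> (point \<times> point set) set" where
  "incidences P L = {(p, l). p \<in> P \<and> l \<in> L \<and> p \<in> l}"

definition inc_adj :: "point set \<Rightarrow> point set set \<Rightarrow> (point + point set) \<Rightarrow> (point + point set) \<Rightarrow> bool" where
  "inc_adj P L u v \<longleftrightarrow>
     (\<exists>p l. (p, l) \<in> incidences P L \<and> ((u = Inl p \<and> v = Inr l) \<or> (u = Inr l \<and> v = Inl p)))"

definition has_cycle_of_length :: "('v \<Rightarrow> 'v \<Rightarrow> bool) \<Rightarrow> nat \<Rightarrow> bool" where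
  "has_cycle_of_length E k \<longleftrightarrow>
     (\<exists>f :: nat \<Rightarrow> 'v. inj_on f {0..<k} \<and> (\<forall>i<k. E (f i) (f ((i + 1) mod k))))"

definition C10_free :: "('v \<Rightarrow> 'v \<Rightarrow> bool) \<Rightarrow> bool" where
  "C10_free E \<longleftrightarrow> \<not> has_cycle_of_length E 10"

end

theory Submission
  imports Defs "HOL-Library.FuncSet"
begin

text \<open>Take the grid of integer points {0..<m} \<times> {0..<H} and the lines y = a x + b with
  slopes a from a set A and integer intercepts b, so that every line meets the grid in m points.
  A 10-cycle in the incidence graph is a closed pentagon p_0, ..., p_4 in which p_j and p_(j+1)
  lie on a line of slope a_j; with x-steps \<Delta>_j, closing up gives \<Sum> \<Delta>_j = 0 and
  \<Sum> a_j \<Delta>_j = 0, where |\<Delta>_j| < m. If A admits only relations of this kind that cancel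
  within each slope class, a parity argument on the pentagon rules the cycle out. A greedy
  choice produces such a set of m slopes below 1024 m^11, which yields about m^13 points and
  lines with m^14 incidences, i.e. a bound n^(1 + 1/13) that beats the required exponent.\<close>

section \<open>Slope sets without nontrivial relations\<close>

text \<open>The slope 0 is admitted even if it is not in A: it is a placeholder that lets the greedy
  step below zero out the terms of a removed slope.\<close>
definition no_nontrivial_relations :: "nat \<Rightarrow> nat \<Rightarrow> int set \<Rightarrow> bool" where
  "no_nontrivial_relations k m A \<longleftrightarrow> (\<forall>a \<Delta> :: nat \<Rightarrow> int.
     (\<forall>i<k. a i \<in> insert 0 A \<and> \<bar>\<Delta> i\<bar> < int m) \<and> (\<Sum>i<k. \<Delta> i) = 0 \<and> (\<Sum>i<k. a i * \<Delta> i) = 0 \<longrightarrow>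
     (\<forall>v. (\<Sum>i<k. if a i = v then \<Delta> i else 0) = 0))"

lemma no_nontrivial_relations_empty: "no_nontrivial_relations k m {}"
  unfolding no_nontrivial_relations_def
proof (intro allI impI)
  fix a \<Delta> :: "nat \<Rightarrow> int" and v
  assume rel: "(\<forall>i<k. a i \<in> insert 0 {} \<and> \<bar>\<Delta> i\<bar> < int m) \<and> (\<Sum>i<k. \<Delta> i) = 0 \<and> (\<Sum>i<k. a i * \<Delta> i) = 0"
  then have "(\<Sum>i<k. if a i = v then \<Delta> i else 0) = (if v = 0 then \<Sum>i<k. \<Delta> i else 0)"
    by (auto intro: sum.cong)
  with rel show "(\<Sum>i<k. if a i = v then \<Delta> i else 0) = 0" by simp
qed

definition forbidden_slopes :: "nat \<Rightarrow> nat \<Rightarrow> int set \<Rightarrow> int set" where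
  "forbidden_slopes k m A = (\<lambda>(a, \<Delta>, C). - (\<Sum>i<k. a i * \<Delta> i) div C) `
     ((\<Pi>\<^sub>E i\<in>{..<k}. insert 0 A) \<times> (\<Pi>\<^sub>E i\<in>{..<k}. {- int m<..<int m}) \<times> ({- int (k * m)..int (k * m)} - {0}))"

lemma card_forbidden_slopes:
  assumes "finite A"
  shows "card (forbidden_slopes k m A) \<le> (card A + 1) ^ k * (2 * m) ^ k * (2 * k * m + 1)"
proof -
  let ?S = "\<Pi>\<^sub>E i\<in>{..<k}. insert 0 A" and ?D = "\<Pi>\<^sub>E i\<in>{..<k}. {- int m<..<int m}"
    and ?C = "{- int (k * m)..int (k * m)} - {0}"
  have "card ?S \<le> (card A + 1) ^ k"
    using assms by (simp add: card_PiE card_insert_if power_mono)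
  moreover have "card ?D \<le> (2 * m) ^ k"
  proof -
    have "card ?D = card {- int m<..<int m} ^ k"
      by (simp add: card_PiE del: card_greaterThanLessThan_int)
    also have "\<dots> \<le> (2 * m) ^ k"
      by (rule power_mono) simp_all
    finally show ?thesis .
  qed
  moreover have "card ?C \<le> 2 * k * m + 1"
    by (simp add: card_Diff_singleton_if nat_add_distrib nat_mult_distrib)
  ultimately have "card ?S * card ?D * card ?C \<le> (card A + 1) ^ k * (2 * m) ^ k * (2 * k * m + 1)"
    by (intro mult_mono) auto
  moreover have "card (forbidden_slopes k m A) \<le> card (?S \<times> ?D \<times> ?C)"
    unfolding forbidden_slopes_def
    by (rule card_image_le) (use assms in \<open>auto intro!: finite_PiE\<close>)
  ultimately show ?thesis
    by (simp add: card_cartesian_product mult.assoc)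
qed

text \<open>If the new slope s carries total weight C \<noteq> 0 in a relation, then s is determined by the
  remaining terms and hence forbidden; if C = 0, replacing s by the placeholder 0 with weight 0
  leaves a relation over A.\<close>
lemma no_nontrivial_relations_insert:
  assumes free: "no_nontrivial_relations k m A" and "s \<notin> forbidden_slopes k m A"
  shows "no_nontrivial_relations k m (insert s A)"
  unfolding no_nontrivial_relations_def
proof (intro allI impI)
  fix a \<Delta> :: "nat \<Rightarrow> int" and v
  assume rel: "(\<forall>i<k. a i \<in> insert 0 (insert s A) \<and> \<bar>\<Delta> i\<bar> < int m) \<and> (\<Sum>i<k. \<Delta> i) = 0 \<and> (\<Sum>i<k. a i * \<Delta> i) = 0"
  define C where "C = (\<Sum>i<k. if a i = s then \<Delta> i else 0)"
  define a' where "a' i = (if i < k then if a i = s then 0 else a i else undefined)" for i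
  define \<Delta>' where "\<Delta>' i = (if i < k then if a i = s then 0 else \<Delta> i else undefined)" for i
  have a'_PiE: "a' \<in> (\<Pi>\<^sub>E i\<in>{..<k}. insert 0 A)"
    using rel unfolding a'_def by (force simp: PiE_iff extensional_def)
  have \<Delta>'_PiE: "\<Delta>' \<in> (\<Pi>\<^sub>E i\<in>{..<k}. {- int m<..<int m})"
    using rel unfolding \<Delta>'_def by (force simp: PiE_iff extensional_def)
  have weighted: "(\<Sum>i<k. a i * \<Delta> i) = s * C + (\<Sum>i<k. a' i * \<Delta>' i)"
    unfolding C_def sum_distrib_left sum.distrib[symmetric]
    by (intro sum.cong) (auto simp: a'_def \<Delta>'_def)
  have total: "(\<Sum>i<k. \<Delta> i) = C + (\<Sum>i<k. \<Delta>' i)"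
    unfolding C_def sum.distrib[symmetric] by (intro sum.cong) (auto simp: \<Delta>'_def)
  have "\<bar>C\<bar> \<le> (\<Sum>i<k. \<bar>if a i = s then \<Delta> i else 0\<bar>)"
    unfolding C_def by (rule sum_abs)
  also have "\<dots> \<le> (\<Sum>i<k. int m)"
    using rel by (intro sum_mono) auto
  finally have C_bound: "\<bar>C\<bar> \<le> int (k * m)" by simp
  show "(\<Sum>i<k. if a i = v then \<Delta> i else 0) = 0"
  proof (cases "C = 0")
    case False
    have "s * C = - (\<Sum>i<k. a' i * \<Delta>' i)"
      using weighted rel by simp
    then have "s = - (\<Sum>i<k. a' i * \<Delta>' i) div C"
      using False by (metis nonzero_mult_div_cancel_right)
    moreover have "C \<in> {- int (k * m)..int (k * m)} - {0}"
      using C_bound False by auto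
    ultimately have "s \<in> forbidden_slopes k m A"
      unfolding forbidden_slopes_def
      by (intro image_eqI[of _ _ "(a', \<Delta>', C)"]) (use a'_PiE \<Delta>'_PiE in auto)
    with assms(2) show ?thesis by simp
  next
    case True
    have "(\<forall>i<k. a' i \<in> insert 0 A \<and> \<bar>\<Delta>' i\<bar> < int m) \<and> (\<Sum>i<k. \<Delta>' i) = 0 \<and> (\<Sum>i<k. a' i * \<Delta>' i) = 0"
      using weighted total rel True unfolding a'_def \<Delta>'_def by auto
    then have "(\<Sum>i<k. if a' i = v then \<Delta>' i else 0) = 0"
      using free unfolding no_nontrivial_relations_def by blast
    moreover have "v \<noteq> s \<Longrightarrow> (\<Sum>i<k. if a i = v then \<Delta> i else 0) = (\<Sum>i<k. if a' i = v then \<Delta>' i else 0)"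
      by (intro sum.cong) (auto simp: a'_def \<Delta>'_def)
    ultimately show ?thesis
      using True C_def by (cases "v = s") auto
  qed
qed

lemma exists_no_nontrivial_relations:
  assumes "m + m ^ k * (2 * m) ^ k * (2 * k * m + 1) < N"
  shows "\<exists>A. finite A \<and> A \<subseteq> {0..<int N} \<and> card A = m \<and> no_nontrivial_relations k m A"
proof -
  have "\<exists>A. finite A \<and> A \<subseteq> {0..<int N} \<and> card A = t \<and> no_nontrivial_relations k m A" if "t \<le> m" for t
    using that
  proof (induction t)
    case 0
    show ?case using no_nontrivial_relations_empty by (intro exI[of _ "{}"]) auto
  next
    case (Suc t)
    then obtain A where A: "finite A" "A \<subseteq> {0..<int N}" "card A = t" "no_nontrivial_relations k m A"
      by auto
    let ?F = "forbidden_slopes k m A"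
    have "finite ?F"
      unfolding forbidden_slopes_def using A(1) by (auto intro!: finite_PiE)
    have "card (A \<union> ?F) \<le> card A + card ?F"
      by (rule card_Un_le)
    also have "\<dots> \<le> t + (t + 1) ^ k * (2 * m) ^ k * (2 * k * m + 1)"
      using card_forbidden_slopes[OF A(1), of k m] A(3) by simp
    also have "\<dots> \<le> t + m ^ k * (2 * m) ^ k * (2 * k * m + 1)"
    proof -
      have "(t + 1) ^ k \<le> m ^ k"
        using Suc.prems by (simp add: power_mono)
      then show ?thesis
        by (intro add_left_mono mult_right_mono) simp_all
    qed
    also have "\<dots> < N"
      using Suc.prems assms by linarith
    finally have small: "card (A \<union> ?F) < card {0..<int N}"
      by simp
    have "\<not> {0..<int N} \<subseteq> A \<union> ?F"
    proof
      assume "{0..<int N} \<subseteq> A \<union> ?F"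
      then have "card {0..<int N} \<le> card (A \<union> ?F)"
        using A(1) \<open>finite ?F\<close> by (intro card_mono) auto
      with small show False by simp
    qed
    then obtain s where s: "s \<in> {0..<int N}" "s \<notin> A" "s \<notin> ?F"
      by blast
    show ?case
      using A s no_nontrivial_relations_insert[OF A(4) s(3)] by (intro exI[of _ "insert s A"]) auto
  qed
  then show ?thesis by blast
qed

section \<open>Pentagons in the incidence graph\<close>

lemma sum_lessThan_rotate:
  fixes g :: "nat \<Rightarrow> 'a::comm_monoid_add"
  shows "(\<Sum>j<k. g (Suc j mod k)) = (\<Sum>j<k. g j)"
proof (rule sum.reindex_bij_betw)
  show "bij_betw (\<lambda>j. Suc j mod k) {..<k} {..<k}"
  proof (rule bij_betw_imageI)
    show "inj_on (\<lambda>j. Suc j mod k) {..<k}"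
      by (auto simp: inj_on_def mod_Suc split: if_splits)
    show "(\<lambda>j. Suc j mod k) ` {..<k} = {..<k}"
    proof
      show "{..<k} \<subseteq> (\<lambda>j. Suc j mod k) ` {..<k}"
      proof
        fix i assume i: "i \<in> {..<k}"
        show "i \<in> (\<lambda>j. Suc j mod k) ` {..<k}"
        proof (cases i)
          case 0
          with i show ?thesis by (intro image_eqI[of _ _ "k - 1"]) auto
        next
          case (Suc j)
          with i show ?thesis by (intro image_eqI[of _ _ j]) auto
        qed
      qed
    qed auto
  qed
qed

text \<open>If all class sums vanished, the class of each index i would contain a second index,
  which is not adjacent, so it is i + 2 or i + 3 (mod 5); the classes would then all have size
  exactly two, which is impossible for five indices.\<close>
lemma pentagon_class_sum_nonzero:
  fixes a \<Delta> :: "nat \<Rightarrow> int"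
  assumes adjacent_distinct: "\<forall>i<5. a i \<noteq> a (Suc i mod 5)" and nonzero: "\<forall>i<5. \<Delta> i \<noteq> 0"
  shows "\<exists>v. (\<Sum>i<5. if a i = v then \<Delta> i else 0) \<noteq> 0"
proof (rule ccontr)
  assume "\<not> ?thesis"
  moreover have "(\<Sum>i<5. if a i = v then \<Delta> i else 0) = (if a 0 = v then \<Delta> 0 else 0)
      + (if a 1 = v then \<Delta> 1 else 0) + (if a 2 = v then \<Delta> 2 else 0)
      + (if a 3 = v then \<Delta> 3 else 0) + (if a 4 = v then \<Delta> 4 else 0)" for v
    by (simp add: eval_nat_numeral)
  ultimately have class_sum: "(if a 0 = v then \<Delta> 0 else 0) + (if a 1 = v then \<Delta> 1 else 0)
      + (if a 2 = v then \<Delta> 2 else 0) + (if a 3 = v then \<Delta> 3 else 0) + (if a 4 = v then \<Delta> 4 else 0) = 0" for v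
    by simp
  have distinct: "a 0 \<noteq> a 1" "a 1 \<noteq> a 2" "a 2 \<noteq> a 3" "a 3 \<noteq> a 4" "a 4 \<noteq> a 0"
    using adjacent_distinct[rule_format, of 0] adjacent_distinct[rule_format, of 1]
      adjacent_distinct[rule_format, of 2] adjacent_distinct[rule_format, of 3]
      adjacent_distinct[rule_format, of 4] by (simp_all add: numeral_2_eq_2)
  have "a 0 = a 2 \<or> a 0 = a 3"
    using class_sum[of "a 0"] distinct nonzero by (auto split: if_splits)
  moreover have "a 1 = a 3 \<or> a 1 = a 4"
    using class_sum[of "a 1"] distinct nonzero by (auto split: if_splits)
  moreover have "a 2 = a 4 \<or> a 2 = a 0"
    using class_sum[of "a 2"] distinct nonzero by (auto split: if_splits)
  moreover have "a 3 = a 0 \<or> a 3 = a 1"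
    using class_sum[of "a 3"] distinct nonzero by (auto split: if_splits)
  moreover have "a 4 = a 1 \<or> a 4 = a 2"
    using class_sum[of "a 4"] distinct nonzero by (auto split: if_splits)
  ultimately show False
    using distinct by metis
qed

lemma inc_adj_Inl_Inr_iff [simp]: "inc_adj P L (Inl p) (Inr l) \<longleftrightarrow> (p, l) \<in> incidences P L"
  unfolding inc_adj_def by blast

lemma inc_adj_Inr_Inl_iff [simp]: "inc_adj P L (Inr l) (Inl p) \<longleftrightarrow> (p, l) \<in> incidences P L"
  unfolding inc_adj_def by blast

lemma inc_adj_isl: "inc_adj P L u v \<Longrightarrow> isl u \<noteq> isl v"
  unfolding inc_adj_def by auto

lemma cycle_rotate:
  assumes "inj_on f {0..<k}" and "\<forall>i<k. E (f i) (f ((i + 1) mod k))"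
  shows "inj_on (\<lambda>i. f (Suc i mod k)) {0..<k}"
    and "\<forall>i<k. E (f (Suc i mod k)) (f (Suc ((i + 1) mod k) mod k))"
proof -
  have "inj_on (\<lambda>i. Suc i mod k) {0..<k}"
    by (auto simp: inj_on_def mod_Suc split: if_splits)
  then show "inj_on (\<lambda>i. f (Suc i mod k)) {0..<k}"
    by (rule comp_inj_on[unfolded o_def, OF _ inj_on_subset[OF assms(1)]]) auto
  show "\<forall>i<k. E (f (Suc i mod k)) (f (Suc ((i + 1) mod k) mod k))"
  proof (intro allI impI)
    fix i assume "i < k"
    then have "E (f (Suc i mod k)) (f ((Suc i mod k + 1) mod k))"
      using assms(2) by simp
    then show "E (f (Suc i mod k)) (f (Suc ((i + 1) mod k) mod k))"
      by (simp add: mod_Suc_eq)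
  qed
qed

lemma incidence_cycle_alternates:
  assumes "has_cycle_of_length (inc_adj P L) (2 * k)"
  shows "\<exists>p l. inj_on p {..<k} \<and> inj_on l {..<k} \<and>
     (\<forall>j<k. (p j, l j) \<in> incidences P L \<and> (p (Suc j mod k), l j) \<in> incidences P L)"
proof -
  obtain f where f: "inj_on f {0..<2 * k}" "\<forall>i<2 * k. inc_adj P L (f i) (f ((i + 1) mod (2 * k)))"
    using assms unfolding has_cycle_of_length_def by blast
  obtain g where g: "inj_on g {0..<2 * k}" "\<forall>i<2 * k. inc_adj P L (g i) (g ((i + 1) mod (2 * k)))"
      and "k = 0 \<or> isl (g 0)"
  proof (cases "k = 0 \<or> isl (f 0)")
    case True
    with f that show ?thesis by blast
  next
    case False
    then have "isl (f (Suc 0 mod (2 * k)))"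
      using inc_adj_isl f(2) by fastforce
    then show ?thesis
      by (intro that[of "\<lambda>i. f (Suc i mod (2 * k))"] cycle_rotate[OF f]) simp
  qed
  have parity: "isl (g i) \<longleftrightarrow> even i" if "i < 2 * k" for i
    using that
  proof (induction i)
    case 0
    with \<open>k = 0 \<or> isl (g 0)\<close> show ?case by simp
  next
    case (Suc i)
    then have "inc_adj P L (g i) (g (Suc i))"
      using g(2) by (metis Suc_eq_plus1 Suc_lessD mod_less)
    with Suc show ?case
      using inc_adj_isl by fastforce
  qed
  define p where "p j = projl (g (2 * j))" for j
  define l where "l j = projr (g (2 * j + 1))" for j
  have g_even: "g (2 * j) = Inl (p j)" if "j < k" for j
    using parity[of "2 * j"] that unfolding p_def by simp
  have g_odd: "g (2 * j + 1) = Inr (l j)" if "j < k" for j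
    using parity[of "2 * j + 1"] that unfolding l_def by (cases "g (2 * j + 1)") auto
  have "inj_on p {..<k}"
  proof (rule inj_onI)
    fix i j assume "i \<in> {..<k}" "j \<in> {..<k}" "p i = p j"
    then have "2 * i = 2 * j"
      using g_even inj_onD[OF g(1), of "2 * i" "2 * j"] by auto
    then show "i = j" by simp
  qed
  moreover have "inj_on l {..<k}"
  proof (rule inj_onI)
    fix i j assume "i \<in> {..<k}" "j \<in> {..<k}" "l i = l j"
    then have "2 * i + 1 = 2 * j + 1"
      using g_odd inj_onD[OF g(1), of "2 * i + 1" "2 * j + 1"] by auto
    then show "i = j" by simp
  qed
  moreover have "(p j, l j) \<in> incidences P L \<and> (p (Suc j mod k), l j) \<in> incidences P L" if "j < k" for j
  proof
    show "(p j, l j) \<in> incidences P L"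
      using g(2)[rule_format, of "2 * j"] g_even[OF that] g_odd[OF that] that by simp
    have "(2 * j + 1 + 1) mod (2 * k) = 2 * (Suc j mod k)"
      by (simp add: mult_mod_right)
    then show "(p (Suc j mod k), l j) \<in> incidences P L"
      using g(2)[rule_format, of "2 * j + 1"] g_odd[OF that] g_even[of "Suc j mod k"] that by simp
  qed
  ultimately show ?thesis by blast
qed

section \<open>Lines, and padding a configuration\<close>

definition line :: "int \<Rightarrow> real \<Rightarrow> point set" where
  "line a b = {(x, y). y = of_int a * x + b}"

definition vertical_line :: "real \<Rightarrow> point set" where
  "vertical_line c = {(x, y). x = c}"

lemma mem_line_iff: "p \<in> line a b \<longleftrightarrow> snd p = of_int a * fst p + b"
  by (cases p) (simp add: line_def)

lemma is_line_line: "is_line (line a b)"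
  unfolding is_line_def line_def
  by (rule exI[of _ "- of_int a"], rule exI[of _ 1], rule exI[of _ b]) (auto simp: algebra_simps)

lemma is_line_vertical_line: "is_line (vertical_line c)"
  unfolding is_line_def vertical_line_def
  by (rule exI[of _ 1], rule exI[of _ 0], rule exI[of _ c]) auto

lemma line_eq_iff: "line a b = line a' b' \<longleftrightarrow> a = a' \<and> b = b'"
proof
  assume eq: "line a b = line a' b'"
  have "(0, b) \<in> line a' b'" "(1, of_int a + b) \<in> line a' b'"
    unfolding eq[symmetric] by (simp_all add: line_def)
  then show "a = a' \<and> b = b'"
    by (simp add: line_def)
qed simp

lemma vertical_line_eq_iff: "vertical_line c = vertical_line c' \<longleftrightarrow> c = c'"
proof
  assume eq: "vertical_line c = vertical_line c'"
  have "(c, 0) \<in> vertical_line c"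
    by (simp add: vertical_line_def)
  then show "c = c'"
    unfolding eq by (simp add: vertical_line_def)
qed simp

lemma finite_line_inter_vertical:
  assumes "is_line l" and "l \<noteq> vertical_line c"
  shows "finite {y. (c, y) \<in> l}"
proof -
  obtain a b e where ab: "(a, b) \<noteq> (0, 0)" and l: "l = {(x, y). a * x + b * y = e}"
    using assms(1) unfolding is_line_def by blast
  show ?thesis
  proof (cases "b = 0")
    case True
    then have "a \<noteq> 0" using ab by simp
    have "a * c \<noteq> e"
    proof
      assume "a * c = e"
      then have "l = vertical_line c"
        using True \<open>a \<noteq> 0\<close> unfolding l vertical_line_def by auto
      with assms(2) show False ..
    qed
    then have "{y. (c, y) \<in> l} = {}"
      using True unfolding l by simp
    then show ?thesis by simp
  next
    case False
    have "y = (e - a * c) / b" if "(c, y) \<in> l" for y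
      using that False unfolding l by (simp add: eq_divide_eq algebra_simps)
    then have "{y. (c, y) \<in> l} \<subseteq> {(e - a * c) / b}"
      by blast
    then show ?thesis by (rule finite_subset) simp
  qed
qed

lemma finite_vertical_lines_in:
  assumes "finite L"
  shows "finite {c. vertical_line c \<in> L}"
proof -
  have "inj vertical_line"
    by (simp add: inj_def vertical_line_eq_iff)
  then show ?thesis
    using finite_vimageI[OF assms] by (simp add: vimage_def)
qed

text \<open>A vertical line outside L meets each line of L in at most one point.\<close>
lemma exists_point_off_lines:
  assumes "finite P" and "finite L" and "\<forall>l\<in>L. is_line l"
  shows "\<exists>p. p \<notin> P \<and> (\<forall>l\<in>L. p \<notin> l)"
proof -
  obtain c where c: "vertical_line c \<notin> L"
    using ex_new_if_finite[OF infinite_UNIV_char_0 finite_vertical_lines_in[OF assms(2)]] by auto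
  have "finite (\<Union>l\<in>L. {y. (c, y) \<in> l})"
  proof (rule finite_UN_I[OF assms(2)])
    fix l assume "l \<in> L"
    with assms(3) c show "finite {y. (c, y) \<in> l}"
      by (intro finite_line_inter_vertical) auto
  qed
  then have "finite (snd ` P \<union> (\<Union>l\<in>L. {y. (c, y) \<in> l}))"
    using assms(1) by simp
  then obtain y where y: "y \<notin> snd ` P \<union> (\<Union>l\<in>L. {y. (c, y) \<in> l})"
    using ex_new_if_finite[OF infinite_UNIV_char_0] by blast
  then have "(c, y) \<notin> P"
    by force
  with y show ?thesis by blast
qed

lemma exists_line_off_points:
  assumes "finite P" and "finite L"
  shows "\<exists>l. is_line l \<and> l \<notin> L \<and> (\<forall>p\<in>P. p \<notin> l)"
proof -
  have "finite (fst ` P \<union> {c. vertical_line c \<in> L})"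
    using assms finite_vertical_lines_in by simp
  then obtain c where c: "c \<notin> fst ` P \<union> {c. vertical_line c \<in> L}"
    using ex_new_if_finite[OF infinite_UNIV_char_0] by blast
  have "\<forall>p\<in>P. p \<notin> vertical_line c"
  proof
    fix p assume "p \<in> P"
    then have "fst p \<noteq> c"
      using c by blast
    then show "p \<notin> vertical_line c"
      by (cases p) (simp add: vertical_line_def)
  qed
  with c show ?thesis
    using is_line_vertical_line by blast
qed

lemma exists_points_off_lines:
  assumes "finite P" and "finite L" and "\<forall>l\<in>L. is_line l"
  shows "\<exists>Q. finite Q \<and> card Q = k \<and> P \<inter> Q = {} \<and> (\<forall>q\<in>Q. \<forall>l\<in>L. q \<notin> l)"
proof (induction k)
  case 0
  show ?case by (intro exI[of _ "{}"]) simp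
next
  case (Suc k)
  then obtain Q where Q: "finite Q" "card Q = k" "P \<inter> Q = {}" "\<forall>q\<in>Q. \<forall>l\<in>L. q \<notin> l"
    by blast
  obtain p where "p \<notin> P \<union> Q" "\<forall>l\<in>L. p \<notin> l"
    using exists_point_off_lines[of "P \<union> Q" L] assms Q(1) by auto
  with Q show ?case
    by (intro exI[of _ "insert p Q"]) auto
qed

lemma exists_lines_off_points:
  assumes "finite P" and "finite L"
  shows "\<exists>M. finite M \<and> card M = k \<and> L \<inter> M = {} \<and> (\<forall>l\<in>M. is_line l \<and> (\<forall>p\<in>P. p \<notin> l))"
proof (induction k)
  case 0
  show ?case by (intro exI[of _ "{}"]) simp
next
  case (Suc k)
  then obtain M where M: "finite M" "card M = k" "L \<inter> M = {}" "\<forall>l\<in>M. is_line l \<and> (\<forall>p\<in>P. p \<notin> l)"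
    by blast
  obtain l where "is_line l" "l \<notin> L \<union> M" "\<forall>p\<in>P. p \<notin> l"
    using exists_line_off_points[of P "L \<union> M"] assms M(1) by auto
  with M show ?case
    by (intro exI[of _ "insert l M"]) auto
qed

lemma pad_configuration:
  assumes "finite P0" and "finite L0" and "\<forall>l\<in>L0. is_line l" and "card P0 \<le> n" and "card L0 \<le> n"
  shows "\<exists>P L. finite P \<and> card P = n \<and> finite L \<and> card L = n \<and> (\<forall>l\<in>L. is_line l) \<and>
    incidences P L = incidences P0 L0"
proof -
  obtain M where M: "finite M" "card M = n - card L0" "L0 \<inter> M = {}" "\<forall>l\<in>M. is_line l \<and> (\<forall>p\<in>P0. p \<notin> l)"
    using exists_lines_off_points[OF assms(1,2)] by blast
  obtain Q where Q: "finite Q" "card Q = n - card P0" "P0 \<inter> Q = {}" "\<forall>q\<in>Q. \<forall>l\<in>L0 \<union> M. q \<notin> l"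
  proof -
    have "\<forall>l\<in>L0 \<union> M. is_line l"
      using assms(3) M(4) by blast
    then show ?thesis
      using exists_points_off_lines[of P0 "L0 \<union> M" "n - card P0"] assms(1,2) M(1) that by auto
  qed
  have "incidences (P0 \<union> Q) (L0 \<union> M) = incidences P0 L0"
    using M(4) Q(4) unfolding incidences_def by blast
  moreover have "card (P0 \<union> Q) = n" "card (L0 \<union> M) = n"
    using assms M Q by (simp_all add: card_Un_disjoint)
  ultimately show ?thesis
    using assms M Q by (intro exI[of _ "P0 \<union> Q"] exI[of _ "L0 \<union> M"]) auto
qed

lemma pentagon_on_slope_lines_impossible:
  fixes p :: "nat \<Rightarrow> point" and l :: "nat \<Rightarrow> point set"
  assumes free: "no_nontrivial_relations 5 m A"
    and on: "\<forall>j<5. p j \<in> l j \<and> p (Suc j mod 5) \<in> l j"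
    and slopes: "\<forall>j<5. a j \<in> A \<and> l j = line (a j) (b j)"
    and columns: "\<forall>j<5. X j < m \<and> fst (p j) = real (X j)"
    and "inj_on p {..<5}" and "inj_on l {..<5}"
  shows False
proof -
  define \<Delta> where "\<Delta> j = int (X (Suc j mod 5)) - int (X j)" for j
  have rise: "snd (p (Suc j mod 5)) - snd (p j) = of_int (a j * \<Delta> j)" if "j < 5" for j
  proof -
    have "p j \<in> line (a j) (b j)" "p (Suc j mod 5) \<in> line (a j) (b j)"
      using that on slopes by auto
    moreover have "fst (p j) = real (X j)" "fst (p (Suc j mod 5)) = real (X (Suc j mod 5))"
      using that columns by simp_all
    ultimately show ?thesis
      unfolding \<Delta>_def mem_line_iff by (simp add: algebra_simps)
  qed
  have "real_of_int (\<Sum>j<5. a j * \<Delta> j) = (\<Sum>j<5. snd (p (Suc j mod 5)) - snd (p j))"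
    unfolding of_int_sum by (rule sum.cong) (simp_all add: rise)
  also have "\<dots> = 0"
    by (simp add: sum_subtractf sum_lessThan_rotate[of "\<lambda>j. snd (p j)"])
  finally have weighted: "(\<Sum>j<5. a j * \<Delta> j) = 0"
    by (simp only: of_int_eq_0_iff)
  have total: "(\<Sum>j<5. \<Delta> j) = 0"
    unfolding \<Delta>_def by (simp add: sum_subtractf sum_lessThan_rotate[of "\<lambda>j. int (X j)"])
  have "a j \<in> insert 0 A \<and> \<bar>\<Delta> j\<bar> < int m" if "j < 5" for j
  proof -
    have "X (Suc j mod 5) < m" "X j < m"
      using that columns by simp_all
    with that slopes show ?thesis
      unfolding \<Delta>_def by auto
  qed
  then have class_sums: "\<forall>v. (\<Sum>j<5. if a j = v then \<Delta> j else 0) = 0"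
    using free weighted total unfolding no_nontrivial_relations_def by blast
  have neighbour_ne: "Suc j mod 5 \<noteq> j" "Suc j mod 5 < 5" if "j < 5" for j :: nat
    using that by (auto simp: mod_Suc)
  have "\<Delta> j \<noteq> 0" if "j < 5" for j
  proof
    assume "\<Delta> j = 0"
    with that on slopes columns neighbour_ne[OF that] have "p (Suc j mod 5) = p j"
      unfolding \<Delta>_def line_def by (auto simp: prod_eq_iff)
    with inj_onD[OF \<open>inj_on p {..<5}\<close>] neighbour_ne[OF that] that show False
      by auto
  qed
  moreover have "a j \<noteq> a (Suc j mod 5)" if "j < 5" for j
  proof
    assume same_slope: "a j = a (Suc j mod 5)"
    have "p (Suc j mod 5) \<in> line (a j) (b j)" "p (Suc j mod 5) \<in> line (a (Suc j mod 5)) (b (Suc j mod 5))"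
      using that on slopes neighbour_ne[OF that] by auto
    with same_slope have "b j = b (Suc j mod 5)"
      by (simp add: mem_line_iff)
    with that slopes neighbour_ne[OF that] same_slope have "l j = l (Suc j mod 5)"
      by auto
    with inj_onD[OF \<open>inj_on l {..<5}\<close>] neighbour_ne[OF that] that show False
      by auto
  qed
  ultimately show False
    using pentagon_class_sum_nonzero class_sums by blast
qed

lemma C10_free_on_slope_lines:
  assumes free: "no_nontrivial_relations 5 m A"
    and columns: "\<forall>p\<in>P. \<exists>x<m. fst p = real x"
    and slopes: "\<forall>l\<in>L. \<exists>a b. a \<in> A \<and> l = line a b"
  shows "C10_free (inc_adj P L)"
  unfolding C10_free_def
proof
  assume "has_cycle_of_length (inc_adj P L) 10"
  then obtain p l where "inj_on p {..<5}" "inj_on l {..<5}"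
    and on: "\<forall>j<5. (p j, l j) \<in> incidences P L \<and> (p (Suc j mod 5), l j) \<in> incidences P L"
    using incidence_cycle_alternates[of P L 5] by auto
  have "\<forall>j<5. \<exists>x. x < m \<and> fst (p j) = real x"
    using on columns unfolding incidences_def by blast
  then obtain X where "\<forall>j<5. X j < m \<and> fst (p j) = real (X j)"
    by metis
  moreover have "\<forall>j<5. \<exists>a b. a \<in> A \<and> l j = line a b"
    using on slopes unfolding incidences_def by blast
  then obtain a b where "\<forall>j<5. a j \<in> A \<and> l j = line (a j) (b j)"
    by metis
  moreover have "\<forall>j<5. p j \<in> l j \<and> p (Suc j mod 5) \<in> l j"
    using on unfolding incidences_def by blast
  ultimately show False
    using pentagon_on_slope_lines_impossible[OF free] \<open>inj_on p {..<5}\<close> \<open>inj_on l {..<5}\<close> by blast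
qed

section \<open>The construction\<close>

definition grid :: "nat \<Rightarrow> nat \<Rightarrow> point set" where
  "grid m H = (\<lambda>(x, y). (real x, real y)) ` ({..<m} \<times> {..<H})"

definition slope_lines :: "int set \<Rightarrow> nat \<Rightarrow> point set set" where
  "slope_lines A H0 = (\<lambda>(a, b). line a (real b)) ` (A \<times> {..<H0})"

lemma finite_grid: "finite (grid m H)"
  unfolding grid_def by simp

lemma card_grid: "card (grid m H) = m * H"
  unfolding grid_def by (subst card_image) (auto simp: inj_on_def card_cartesian_product)

lemma finite_slope_lines: "finite A \<Longrightarrow> finite (slope_lines A H0)"
  unfolding slope_lines_def by simp

lemma card_slope_lines: "card (slope_lines A H0) = card A * H0"
  unfolding slope_lines_def
  by (subst card_image) (auto simp: inj_on_def line_eq_iff card_cartesian_product)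

lemma finite_incidences: "finite P \<Longrightarrow> finite L \<Longrightarrow> finite (incidences P L)"
  by (rule finite_subset[of _ "P \<times> L"]) (auto simp: incidences_def)

text \<open>The height H0 + S m is what makes every line of slope below S and intercept below H0
  meet all m grid columns.\<close>
lemma card_incidences_grid_slope_lines:
  assumes "finite A" and "A \<subseteq> {0..<int S}"
  shows "card A * H0 * m \<le> card (incidences (grid m (H0 + S * m)) (slope_lines A H0))"
proof -
  let ?P = "grid m (H0 + S * m)" and ?L = "slope_lines A H0"
  define F where "F = (\<lambda>(a, b, x). ((real x, real (nat a * x + b)), line a (real b)))"
  have into: "F ` (A \<times> {..<H0} \<times> {..<m}) \<subseteq> incidences ?P ?L"
  proof
    fix t assume "t \<in> F ` (A \<times> {..<H0} \<times> {..<m})"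
    then obtain a b x where abx: "a \<in> A" "b < H0" "x < m" and t: "t = F (a, b, x)"
      by auto
    have "0 \<le> a" "a < int S"
      using assms(2) abx(1) by auto
    then have "nat a \<le> S"
      by simp
    then have "nat a * x + b < H0 + S * m"
      using abx(2,3) mult_mono[of "nat a" S x m] by linarith
    then have "(real x, real (nat a * x + b)) \<in> ?P"
      unfolding grid_def using abx(3) by (intro image_eqI[of _ _ "(x, nat a * x + b)"]) auto
    moreover have "line a (real b) \<in> ?L"
      unfolding slope_lines_def using abx(1,2) by (intro image_eqI[of _ _ "(a, b)"]) auto
    moreover have "(real x, real (nat a * x + b)) \<in> line a (real b)"
      using \<open>0 \<le> a\<close> by (simp add: mem_line_iff)
    ultimately show "t \<in> incidences ?P ?L"
      unfolding t F_def incidences_def by simp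
  qed
  have "inj_on F (A \<times> {..<H0} \<times> {..<m})"
    unfolding F_def by (auto simp: inj_on_def line_eq_iff)
  then have "card (A \<times> {..<H0} \<times> {..<m}) \<le> card (incidences ?P ?L)"
    using into finite_incidences[OF finite_grid finite_slope_lines[OF assms(1)]]
    by (rule card_inj_on_le)
  then show ?thesis
    by (simp add: card_cartesian_product mult.assoc)
qed

lemma exists_C10_free_configuration:
  assumes "no_nontrivial_relations 5 m A" and "finite A" and "A \<subseteq> {0..<int S}"
    and "m * (H0 + S * m) \<le> n" and "card A * H0 \<le> n"
  shows "\<exists>P L. finite P \<and> card P = n \<and> finite L \<and> card L = n \<and> (\<forall>l\<in>L. is_line l) \<and>
    C10_free (inc_adj P L) \<and> card A * H0 * m \<le> card (incidences P L)"
proof -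
  let ?P = "grid m (H0 + S * m)" and ?L = "slope_lines A H0"
  have lines: "\<forall>l\<in>?L. is_line l"
    by (auto simp: slope_lines_def is_line_line)
  have "card ?P \<le> n" "card ?L \<le> n"
    using assms(4,5) by (simp_all only: card_grid card_slope_lines)
  from pad_configuration[OF finite_grid finite_slope_lines[OF assms(2)] lines this]
  obtain P L where PL: "finite P" "card P = n" "finite L" "card L = n" "\<forall>l\<in>L. is_line l"
      and same: "incidences P L = incidences ?P ?L"
    by blast
  have "C10_free (inc_adj ?P ?L)"
    by (rule C10_free_on_slope_lines[OF assms(1)]) (auto simp: grid_def slope_lines_def)
  moreover have "inc_adj P L = inc_adj ?P ?L"
    unfolding inc_adj_def[abs_def] same ..
  ultimately show ?thesis
    using PL same card_incidences_grid_slope_lines[OF assms(2,3), of H0 m]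
    by (intro exI[of _ P] exI[of _ L]) simp
qed

section \<open>Choosing the parameters\<close>

lemma no_nontrivial_relations_zero: "no_nontrivial_relations k m {0}"
  using no_nontrivial_relations_empty[of k m] by (simp add: no_nontrivial_relations_def)

lemma exists_nat_bracket:
  fixes f :: "nat \<Rightarrow> nat"
  assumes "f 0 \<le> n" and "n < f N"
  shows "\<exists>m. f m \<le> n \<and> n < f (Suc m)"
  using ex_least_nat_less[of "\<lambda>k. n < f k" N] assms by (auto simp: not_less)

lemma powr_16_15_le_of_le_power_13:
  fixes x y K :: real
  assumes "1 \<le> x" and "0 < y" and "1 \<le> K" and x_le: "x \<le> K * y ^ 13"
  shows "x powr (1 + 1/15) \<le> K\<^sup>2 * y ^ 14"
proof -
  have "(y ^ 13) powr (1/13) = (y powr real 13) powr (1/13)"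
    using assms(2) by (simp only: powr_realpow)
  also have "\<dots> = y"
    using assms(2) by (simp only: powr_powr) simp
  finally have "(y ^ 13) powr (1/13) = y" .
  then have "(K * y ^ 13) powr (1/13) = K powr (1/13) * y"
    using assms(2,3) by (simp add: powr_mult)
  also have "\<dots> \<le> K * y"
    using assms(2,3) powr_mono[of "1/13" 1 K] by simp
  finally have root: "x powr (1/13) \<le> K * y"
    using x_le assms(1) powr_mono2[of "1/13" x "K * y ^ 13"] by linarith
  have "x powr (1 + 1/15) \<le> x powr (1 + 1/13)"
    using assms(1) by (intro powr_mono) auto
  also have "\<dots> = x * x powr (1/13)"
    unfolding powr_add using assms(1) by simp
  also have "\<dots> \<le> (K * y ^ 13) * (K * y)"
    using x_le root assms(1) by (intro mult_mono) auto
  also have "\<dots> = K\<^sup>2 * y ^ 14"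
    by (simp add: power2_eq_square flip: power_Suc2)
  finally show ?thesis .
qed

lemma small_C10_free_configuration:
  assumes "1 < n" and "n < 2048"
  shows "\<exists>P L. finite P \<and> card P = n \<and> finite L \<and> card L = n \<and> (\<forall>l\<in>L. is_line l) \<and>
    C10_free (inc_adj P L) \<and> real (card (incidences P L)) \<ge> 1 / 2^48 * real n powr (1 + 1/15)"
proof -
  obtain P L where PL: "finite P" "card P = n" "finite L" "card L = n" "\<forall>l\<in>L. is_line l"
      "C10_free (inc_adj P L)" "1 \<le> card (incidences P L)"
    using exists_C10_free_configuration[OF no_nontrivial_relations_zero, of 1 1 1 n] assms(1) by auto
  have "real n powr (1 + 1/15) \<le> real n powr 2"
    using assms(1) by (intro powr_mono) auto
  also have "\<dots> = real n ^ 2"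
    using assms(1) by (simp add: powr_realpow)
  also have "\<dots> \<le> 2048 ^ 2"
    using assms(2) by (intro power_mono) auto
  finally have "1 / 2^48 * real n powr (1 + 1/15) \<le> 1"
    by simp
  with PL show ?thesis
    by (intro exI[of _ P] exI[of _ L]) auto
qed

lemma large_C10_free_configuration:
  assumes "1 \<le> m" and "2048 * m ^ 13 \<le> n" and "n < 2048 * Suc m ^ 13"
  shows "\<exists>P L. finite P \<and> card P = n \<and> finite L \<and> card L = n \<and> (\<forall>l\<in>L. is_line l) \<and>
    C10_free (inc_adj P L) \<and> real (card (incidences P L)) \<ge> 1 / 2^48 * real n powr (1 + 1/15)"
proof -
  define S where "S = 1024 * m ^ 11"
  have "m \<le> m ^ 11" "m ^ 10 \<le> m ^ 11" "1 \<le> m ^ 11"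
    using assms(1) by (simp_all add: self_le_power power_increasing)
  moreover have "m + m ^ 5 * (2 * m) ^ 5 * (2 * 5 * m + 1) = m + 320 * m ^ 11 + 32 * m ^ 10"
    by algebra
  ultimately have "m + m ^ 5 * (2 * m) ^ 5 * (2 * 5 * m + 1) < S"
    unfolding S_def by linarith
  then obtain A where A: "finite A" "A \<subseteq> {0..<int S}" "card A = m" "no_nontrivial_relations 5 m A"
    using exists_no_nontrivial_relations by blast
  have "m * (S * m + S * m) = 2048 * m ^ 13" "card A * (S * m) = 1024 * m ^ 13"
    unfolding S_def A(3) by algebra+
  with assms(2) obtain P L where PL: "finite P" "card P = n" "finite L" "card L = n" "\<forall>l\<in>L. is_line l"
      "C10_free (inc_adj P L)" "card A * (S * m) * m \<le> card (incidences P L)"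
    using exists_C10_free_configuration[OF A(4,1,2), of "S * m" n] by auto
  have "Suc m ^ 13 \<le> (2 * m) ^ 13"
    using assms(1) by (intro power_mono) auto
  then have "n \<le> 2^24 * m ^ 13"
    using assms(3) by (simp add: power_mult_distrib)
  then have "real n \<le> real (2^24 * m ^ 13)"
    by (simp only: of_nat_le_iff)
  then have "real n \<le> 2^24 * real m ^ 13"
    by simp
  moreover have "1 \<le> n"
    using assms(2) one_le_power[OF assms(1), of 13] by linarith
  ultimately have "real n powr (1 + 1/15) \<le> (2^24)\<^sup>2 * real m ^ 14"
    using assms(1) powr_16_15_le_of_le_power_13[of "real n" "real m" "2^24"] by simp
  also have "\<dots> \<le> 2^48 * real (card (incidences P L))"
  proof -
    have "card A * (S * m) * m = 1024 * m ^ 14"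
      unfolding S_def A(3) by algebra
    then have "m ^ 14 \<le> card A * (S * m) * m"
      by simp
    with PL(7) have "real (m ^ 14) \<le> real (card (incidences P L))"
      by (simp only: of_nat_le_iff)
    then show ?thesis
      by simp
  qed
  finally show ?thesis
    using PL by (intro exI[of _ P] exI[of _ L]) auto
qed

theorem theorem1p3:
  shows "\<exists>c::real. c > 0 \<and>
    (\<forall>n::nat. n > 1 \<longrightarrow>
      (\<exists>(P :: point set) (L :: point set set).
         finite P \<and> card P = n \<and> finite L \<and> card L = n \<and> (\<forall>l\<in>L. is_line l) \<and>
         C10_free (inc_adj P L) \<and>
         real (card (incidences P L)) \<ge> c * real n powr (1 + 1/15)))"
proof (intro exI[of _ "1 / 2^48"] conjI allI impI)
  fix n :: nat assume "n > 1"
  have "n < 2048 * Suc n ^ 13"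
    using self_le_power[of "Suc n" 13] by simp
  with exists_nat_bracket[of "\<lambda>m. 2048 * m ^ 13" n "Suc n"]
  obtain m where m: "2048 * m ^ 13 \<le> n" "n < 2048 * Suc m ^ 13"
    by auto
  show "\<exists>P L. finite P \<and> card P = n \<and> finite L \<and> card L = n \<and> (\<forall>l\<in>L. is_line l) \<and>
      C10_free (inc_adj P L) \<and> real (card (incidences P L)) \<ge> 1 / 2^48 * real n powr (1 + 1/15)"
  proof (cases "m = 0")
    case True
    with m(2) have "n < 2048"
      by simp
    with \<open>n > 1\<close> show ?thesis
      by (rule small_C10_free_configuration)
  next
    case False
    then have "1 \<le> m"
      by simp
    with m show ?thesis
      by (intro large_C10_free_configuration)
  qed
qed simp

end
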